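(* Let $0<p<1$ and let $\{a_n\}_{n\geq 0}$ be a sequence of non-negative real numbers such that $\{a^p_n\}_{n\geq 0}$ converges to a finite limit $a\in\mathbb{R}$. Then $\left\{\frac{1}{n+1}a^z_n(p)\right\}_{n\geq 0}$ converges to $0$, where $$a^z_n(p)=\sum_{i=\lfloor pn+\epsilon(n)\rfloor}^{n}w_n^i(p)\, a_i.$$
   Context: $a^p_n=\sum_{i=0}^n\binom{n}{i}p^i(1-p)^{n-i}a_i$. For $0<p<1$, $n\in\mathbb{N}$ and $0\le i\le n$, $w_n^i(p)=\sum_{j=i}^n\binom{j}{i}p^i(1-p)^{j-i}$. $\epsilon(n)=\sqrt{n}\log n$ for $n\geq2$ and $\epsilon(n)=1$ otherwise; a sum whose lower index exceeds its upper index is $0$. *)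

theory Defs
  imports Complex_Main
begin

definition binom_trans :: "real \<Rightarrow> (nat \<Rightarrow> real) \<Rightarrow> nat \<Rightarrow> real" where
  "binom_trans p a n = (\<Sum>i=0..n. real (n choose i) * p ^ i * (1 - p) ^ (n - i) * a i)"

definition wnp :: "nat \<Rightarrow> nat \<Rightarrow> real \<Rightarrow> real" where
  "wnp n i p = (\<Sum>j=i..n. real (j choose i) * p ^ i * (1 - p) ^ (j - i))"

definition eps :: "nat \<Rightarrow> real" where
  "eps n = (if n \<ge> 2 then sqrt (real n) * ln (real n) else 1)"

definition az :: "real \<Rightarrow> (nat \<Rightarrow> real) \<Rightarrow> nat \<Rightarrow> real" where
  "az p a n = (\<Sum>i = nat \<lfloor>p * real n + eps n\<rfloor> .. n. wnp n i p * a i)"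

end

theory Submission
  imports Defs "HOL-Probability.Hoeffding" "HOL-Real_Asymp.Real_Asymp"
begin

text \<open>
  Both halves of the argument are tail estimates. First, \<open>p w\<^sup>i\<^sub>N(p)\<close> is the
  probability that the \<open>(i+1)\<close>-st success of a Bernoulli(\<open>p\<close>) sequence occurs
  within \<open>N + 1\<close> trials, which is bounded away from 0 once \<open>N - i \<ge> (i+1)/p\<close>;
  since \<open>a\<^sub>i w\<^sup>i\<^sub>N(p) \<le> a\<^sup>p\<^sub>i + \<dots> + a\<^sup>p\<^sub>N\<close> and the \<open>a\<^sup>p\<^sub>n\<close> are bounded, this gives
  \<open>a\<^sub>i = O(i)\<close>. Second, exchanging the order of summation in \<open>a\<^sup>z\<^sub>n(p)\<close> leaves,
  for each \<open>j \<le> n\<close>, the upper tail of Binomial(\<open>j\<close>, \<open>p\<close>) beyond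
  \<open>p n + \<epsilon>(n) - 1\<close>, which Hoeffding's inequality bounds by
  \<open>exp (-2 (\<epsilon>(n) - 1)\<^sup>2 / n) \<approx> exp (-2 ln\<^sup>2 n)\<close>. This decays faster than the
  polynomial factor \<open>(n + 1)\<^sup>2\<close> coming from \<open>a\<^sub>i = O(i)\<close> and the number of terms.
\<close>

lemma sum_triangle_swap:
  fixes f :: "nat \<Rightarrow> nat \<Rightarrow> 'a::comm_monoid_add"
  shows "(\<Sum>i=k..n. \<Sum>j=i..n. f i j) = (\<Sum>j=k..n. \<Sum>i=k..j. f i j)"
proof -
  have "(\<Sum>i=k..n. \<Sum>j=i..n. f i j) = (\<Sum>i\<in>{k..n}. \<Sum>j\<in>{j\<in>{k..n}. i \<le> j}. f i j)"
    by (intro sum.cong refl) (auto intro: arg_cong[where f="\<lambda>A. sum _ A"])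
  also have "\<dots> = (\<Sum>j\<in>{k..n}. \<Sum>i\<in>{i\<in>{k..n}. i \<le> j}. f i j)"
    by (rule sum.swap_restrict) auto
  also have "\<dots> = (\<Sum>j=k..n. \<Sum>i=k..j. f i j)"
    by (intro sum.cong refl) (auto intro: arg_cong[where f="\<lambda>A. sum _ A"])
  finally show ?thesis .
qed

lemma binomial_tail_sum_le:
  fixes p t :: real
  assumes "0 \<le> p" "p \<le> 1" "0 < n" "0 \<le> t" "real n * p + t \<le> real k"
  shows "(\<Sum>i=k..n. real (n choose i) * p ^ i * (1 - p) ^ (n - i)) \<le> exp (-2 * t\<^sup>2 / real n)"
proof -
  have "(\<Sum>i=k..n. real (n choose i) * p ^ i * (1 - p) ^ (n - i))
      = measure_pmf.prob (binomial_pmf n p) {k..n}"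
    using assms by (subst measure_measure_pmf_finite) auto
  also have "\<dots> \<le> measure_pmf.prob (binomial_pmf n p) {x. real n * p + t \<le> real x}"
    using assms(5) by (intro measure_pmf.finite_measure_mono) auto
  also have "\<dots> \<le> exp (-2 * t\<^sup>2 / real n)"
    using assms by (intro binomial_distribution.prob_ge) (auto simp: binomial_distribution_def)
  finally show ?thesis .
qed

lemma p_wnp_eq_prob_neg_binomial:
  assumes "0 < p" "p \<le> 1"
  shows "p * wnp (i + d) i p = measure_pmf.prob (neg_binomial_pmf (Suc i) p) {..d}"
proof -
  have "wnp (i + d) i p = (\<Sum>k\<le>d. real ((k + i) choose i) * p ^ i * (1 - p) ^ k)"
    unfolding wnp_def atMost_atLeast0
    using sum.shift_bounds_cl_nat_ivl[of "\<lambda>j. real (j choose i) * p ^ i * (1 - p) ^ (j - i)" 0 i d]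
    by (simp add: add.commute)
  also have "p * \<dots> = (\<Sum>k\<le>d. pmf (neg_binomial_pmf (Suc i) p) k)"
    using assms by (simp add: sum_distrib_left pmf_neg_binomial binomial_symmetric[of k "k + i" for k] mult_ac)
  also have "\<dots> = measure_pmf.prob (neg_binomial_pmf (Suc i) p) {..d}"
    by (simp add: measure_measure_pmf_finite)
  finally show ?thesis .
qed

lemma prob_neg_binomial_atMost_ge:
  assumes p: "0 < p" "p < 1" and r: "0 < r" and d: "real r / p \<le> real d"
  shows "1 - exp (-(p ^ 3)) \<le> measure_pmf.prob (neg_binomial_pmf r p) {..d}"
proof -
  let ?X = "neg_binomial_pmf r p"
  have mean_plus_r: "real r * (1 - p) / p + real r = real r / p"
    using p by (simp add: field_simps)
  have "real r + p * real r = real r * (1 + p)"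
    by (simp add: algebra_simps)
  then have "2 * p ^ 3 * (real r)\<^sup>2 / (real r + p * real r) = p ^ 3 * (2 * real r / (1 + p))"
    using r by (simp add: power2_eq_square)
  also have "\<dots> \<ge> p ^ 3 * 1"
    using p r by (intro mult_left_mono) (auto simp: field_simps)
  finally have exponent: "- 2 * p ^ 3 * (real r)\<^sup>2 / (real r + p * real r) \<le> - (p ^ 3)"
    by simp
  have "measure_pmf.prob ?X (UNIV - {..d}) \<le> measure_pmf.prob ?X {x. real r / p \<le> real x}"
    using d by (intro measure_pmf.finite_measure_mono) auto
  also have "\<dots> \<le> exp (- 2 * p ^ 3 * (real r)\<^sup>2 / (real r + p * real r))"
    using prob_neg_binomial_pmf_ge_bound[of p "real r" r] p by (simp add: mean_plus_r)
  also have "\<dots> \<le> exp (-(p ^ 3))"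
    using exponent by simp
  finally show ?thesis
    using measure_pmf.prob_compl[of "{..d}" ?X] by simp
qed

lemma binom_trans_ge_term:
  assumes "0 \<le> p" "p \<le> 1" "\<And>n. a n \<ge> 0" "i \<le> n"
  shows "real (n choose i) * p ^ i * (1 - p) ^ (n - i) * a i \<le> binom_trans p a n"
  unfolding binom_trans_def
  by (rule member_le_sum[where f = "\<lambda>i. real (n choose i) * p ^ i * (1 - p) ^ (n - i) * a i"])
     (use assms in auto)

lemma bounded_binom_trans_imp_linear_bound:
  assumes p: "0 < p" "p < 1" and nonneg: "\<And>n. a n \<ge> 0"
    and bounded: "\<And>m. binom_trans p a m \<le> B"
  shows "a i \<le> 3 * B / (1 - exp (-(p ^ 3))) * (real i + 1)"
proof -
  define c where "c = 1 - exp (-(p ^ 3))"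
  have c: "0 < c"
    using p by (simp add: c_def)
  \<comment> \<open>\<open>(i+1)/p\<close> is the expected number of trials up to the \<open>(i+1)\<close>-st success\<close>
  define d where "d = nat \<lceil>real (Suc i) / p\<rceil>"
  have d: "real (Suc i) / p \<le> real d" "real d \<le> real (Suc i) / p + 1"
    unfolding d_def using p divide_nonneg_pos[of "real (Suc i)" p] by linarith+
  have wnp_ge: "c \<le> p * wnp (i + d) i p"
    using prob_neg_binomial_atMost_ge[of p "Suc i" d] p_wnp_eq_prob_neg_binomial[of p i d] p d
    by (simp add: c_def)
  have "wnp (i + d) i p * a i = (\<Sum>j=i..i+d. real (j choose i) * p ^ i * (1 - p) ^ (j - i) * a i)"
    unfolding wnp_def by (simp add: sum_distrib_right)
  also have "\<dots> \<le> (\<Sum>j=i..i+d. binom_trans p a j)"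
    using p nonneg by (intro sum_mono binom_trans_ge_term) auto
  also have "\<dots> \<le> (\<Sum>j=i..i+d. B)"
    by (intro sum_mono bounded)
  finally have sum_le: "wnp (i + d) i p * a i \<le> real (d + 1) * B"
    by simp
  have B: "0 \<le> B"
    using bounded[of 0] nonneg[of 0] by (simp add: binom_trans_def)
  have "real (d + 1) \<le> real (Suc i) / p + 2"
    using d by simp
  also have "\<dots> \<le> real (Suc i) / p + 2 * real (Suc i) / p"
    using p by (simp add: le_divide_eq)
  also have "\<dots> = 3 * real (Suc i) / p"
    by (simp add: add_divide_distrib[symmetric])
  finally have d_le: "real (d + 1) \<le> 3 * real (Suc i) / p" .
  have "c * a i \<le> p * (wnp (i + d) i p * a i)"
    using wnp_ge nonneg[of i] by (simp add: mult_right_mono flip: mult.assoc)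
  also have "\<dots> \<le> p * (real (d + 1) * B)"
    using sum_le p by simp
  also have "\<dots> \<le> p * (3 * real (Suc i) / p * B)"
    using d_le B p by (intro mult_left_mono mult_right_mono) auto
  also have "\<dots> = 3 * B * (real i + 1)"
    using p by simp
  finally show ?thesis
    using c by (simp add: c_def pos_le_divide_eq mult.commute)
qed

lemma wnp_tail_sum_le:
  fixes p t M :: real
  assumes p: "0 \<le> p" "p \<le> 1" and k: "0 < k" "p * real n + t \<le> real k"
    and t: "0 \<le> t" and M: "0 \<le> M" and a_le: "\<And>i. k \<le> i \<Longrightarrow> i \<le> n \<Longrightarrow> a i \<le> M"
  shows "(\<Sum>i=k..n. wnp n i p * a i) \<le> M * (real n + 1) * exp (-2 * t\<^sup>2 / real n)"
proof -
  define b where "b j i = real (j choose i) * p ^ i * (1 - p) ^ (j - i)" for j i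
  have b_nonneg: "0 \<le> b j i" for j i
    using p by (simp add: b_def)
  have row_le: "(\<Sum>i=k..j. b j i) \<le> exp (-2 * t\<^sup>2 / real n)" if j: "k \<le> j" "j \<le> n" for j
  proof -
    have "real j * p \<le> p * real n"
      using j p by (simp add: mult.commute mult_left_mono)
    then have "(\<Sum>i=k..j. b j i) \<le> exp (-2 * t\<^sup>2 / real j)"
      unfolding b_def using p j k t by (intro binomial_tail_sum_le) auto
    also have "\<dots> \<le> exp (-2 * t\<^sup>2 / real n)"
      using j k by (simp add: frac_le)
    finally show ?thesis .
  qed
  have "(\<Sum>i=k..n. wnp n i p * a i) = (\<Sum>i=k..n. \<Sum>j=i..n. b j i * a i)"
    unfolding wnp_def b_def by (simp add: sum_distrib_right)
  also have "\<dots> \<le> (\<Sum>i=k..n. \<Sum>j=i..n. b j i * M)"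
    using a_le b_nonneg by (intro sum_mono mult_left_mono) auto
  also have "\<dots> = M * (\<Sum>j=k..n. \<Sum>i=k..j. b j i)"
    by (simp add: sum_triangle_swap sum_distrib_left mult.commute)
  also have "\<dots> \<le> M * (\<Sum>j=k..n. exp (-2 * t\<^sup>2 / real n))"
    using M row_le by (intro mult_left_mono sum_mono) auto
  also have "\<dots> \<le> M * ((real n + 1) * exp (-2 * t\<^sup>2 / real n))"
    using M by (intro mult_left_mono mult_right_mono) auto
  finally show ?thesis
    by (simp add: mult.assoc)
qed

lemma eps_ge_1:
  assumes "3 \<le> n"
  shows "1 \<le> eps n"
proof -
  have "exp 1 \<le> real n"
    using exp_le assms by linarith
  then have "1 \<le> ln (real n)"
    using assms by (simp add: ln_ge_iff)
  moreover have "1 \<le> sqrt (real n)"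
    using assms by simp
  ultimately show ?thesis
    using assms mult_mono[of 1 "sqrt (real n)" 1 "ln (real n)"] by (simp add: eps_def)
qed

lemma az_le:
  assumes p: "0 < p" "p < 1" and K: "0 \<le> K" and a_le: "\<And>i. a i \<le> K * (real i + 1)"
    and n: "3 \<le> n"
  shows "az p a n \<le> K * (real n + 1)\<^sup>2 * exp (-2 * (eps n - 1)\<^sup>2 / real n)"
proof -
  define k where "k = nat \<lfloor>p * real n + eps n\<rfloor>"
  have eps: "1 \<le> eps n"
    using n by (rule eps_ge_1)
  have "0 < p * real n"
    using p n by simp
  then have k: "p * real n + (eps n - 1) \<le> real k" "0 < k"
    unfolding k_def using eps by linarith+
  have "(\<Sum>i=k..n. wnp n i p * a i) \<le> K * (real n + 1) * (real n + 1) * exp (-2 * (eps n - 1)\<^sup>2 / real n)"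
  proof (rule wnp_tail_sum_le)
    show "a i \<le> K * (real n + 1)" if "k \<le> i" "i \<le> n" for i
      using K that by (intro order_trans[OF a_le] mult_left_mono) auto
  qed (use p k eps K in auto)
  then show ?thesis
    by (simp add: az_def k_def power2_eq_square mult.assoc)
qed

lemma tendsto_eps_tail_bound:
  "(\<lambda>n. (real n + 1) * exp (-2 * (eps n - 1)\<^sup>2 / real n)) \<longlonglongrightarrow> 0"
proof -
  have "(\<lambda>n. (real n + 1) * exp (-2 * (sqrt (real n) * ln (real n) - 1)\<^sup>2 / real n)) \<longlonglongrightarrow> 0"
    by real_asymp
  moreover have "\<forall>\<^sub>F n in sequentially.
      (real n + 1) * exp (-2 * (sqrt (real n) * ln (real n) - 1)\<^sup>2 / real n)
      = (real n + 1) * exp (-2 * (eps n - 1)\<^sup>2 / real n)"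
    using eventually_ge_at_top[of 2] by eventually_elim (simp add: eps_def)
  ultimately show ?thesis
    by (rule Lim_transform_eventually)
qed

theorem lemma9:
  fixes p :: real and a :: "nat \<Rightarrow> real" and L :: real
  assumes "0 < p" "p < 1"
    and "\<And>n. a n \<ge> 0"
    and "binom_trans p a \<longlonglongrightarrow> L"
  shows "(\<lambda>n. az p a n / real (n + 1)) \<longlonglongrightarrow> 0"
proof -
  note p = assms(1,2) and nonneg = assms(3)
  obtain B where bounded: "\<And>m. binom_trans p a m \<le> B"
    using convergent_imp_Bseq[OF convergentI[OF assms(4)]] by (auto elim!: BseqE simp: abs_le_iff) blast
  define K where "K = 3 * B / (1 - exp (-(p ^ 3)))"
  have a_le: "a i \<le> K * (real i + 1)" for i
    unfolding K_def using bounded_binom_trans_imp_linear_bound p nonneg bounded .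
  have K: "0 \<le> K"
    using a_le[of 0] nonneg[of 0] by simp
  have upper: "az p a n / real (n + 1) \<le> K * ((real n + 1) * exp (-2 * (eps n - 1)\<^sup>2 / real n))"
    if "3 \<le> n" for n
    using az_le[OF p K a_le that] by (simp add: divide_le_eq power2_eq_square mult_ac add.commute)
  have lower: "0 \<le> az p a n / real (n + 1)" for n
    using p nonneg unfolding az_def wnp_def by (intro divide_nonneg_nonneg sum_nonneg mult_nonneg_nonneg) auto
  show ?thesis
  proof (rule tendsto_sandwich[OF _ _ tendsto_const tendsto_mult_right_zero[OF tendsto_eps_tail_bound]])
    show "\<forall>\<^sub>F n in sequentially. 0 \<le> az p a n / real (n + 1)"
      using lower by simp
    show "\<forall>\<^sub>F n in sequentially. az p a n / real (n + 1)
        \<le> K * ((real n + 1) * exp (-2 * (eps n - 1)\<^sup>2 / real n))"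
      using upper eventually_sequentially by blast
  qed
qed

end
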